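(* Let $n>1$ be an integer and let $R$ be an $n$-adically closed ring. Assume that for every prime ideal $p\subset R$ and all $a,b\in R$ with $a\notin p$ and $b\in p$, the polynomial $T^n+aT^{n-1}+b\in R[T]$ has a root $\alpha\in R\setminus p$. Then for any two prime ideals $P,Q$ of $R$, either $P+Q=R$ or $P+Q$ is a prime ideal.
   Context: All rings are commutative with $1$. A ring $R$ is $n$-adically closed if every monic polynomial of degree $n$ with coefficients in $R$ has a root in $R$. *)

theory Defs
  imports "HOL-Algebra.Algebra"
begin

definition n_adically_closed :: "('a, 'b) ring_scheme \<Rightarrow> nat \<Rightarrow> bool" where
  "n_adically_closed R n \<longleftrightarrow>
     (\<forall>c \<in> {..<n} \<rightarrow> carrier R. \<exists>x \<in> carrier R.
        x [^]\<^bsub>R\<^esub> n \<oplus>\<^bsub>R\<^esub> (\<Oplus>\<^bsub>R\<^esub> i\<in>{..<n}. c i \<otimes>\<^bsub>R\<^esub> x [^]\<^bsub>R\<^esub> i) = \<zero>\<^bsub>R\<^esub>)"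

end

theory Submission
  imports Defs
begin

(* Let I = P + Q for prime ideals P, Q of R.  If P \<subseteq> Q then I = Q is prime, so assume
   some p0 \<in> P lies outside Q.  The proof rests on the "power cancellation" property

     (C)   x d^(n-1) \<in> I   \<Longrightarrow>   x \<in> I  or  d^(n-1) \<in> I.

   It is obtained by writing x d^(n-1) = p + q, translating x - d by an element of P out
   of Q and applying the root hypothesis for the prime Q to T^n + (x - d + p1) T^(n-1) - q.
   The resulting root \<alpha> \<notin> Q gives \<alpha> + x - d + p1 \<in> Q, and since \<alpha> - d divides
   \<alpha>^(n-1) - d^(n-1), primality of P forces x \<in> I or d^(n-1) \<in> I.

   Conversely, any proper ideal I with (C) is prime once n-th roots exist (which
   n-adic closedness provides): iterating (C) shows that e^k \<in> I implies e^(n-1) \<in> I;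
   writing c = d^n this yields c^(n-1) \<in> I \<Longrightarrow> c \<in> I, and then
   a b \<in> I \<Longrightarrow> a b^(n-1) \<in> I \<Longrightarrow> a \<in> I or b \<in> I. *)

context cring
begin

lemma mem_set_add_iff: "z \<in> set_add R P Q \<longleftrightarrow> (\<exists>p\<in>P. \<exists>q\<in>Q. z = p \<oplus> q)"
  unfolding set_add_def' by auto

lemma set_add_of_subset:
  assumes P: "ideal P R" and Q: "ideal Q R" and PQ: "P \<subseteq> Q"
  shows "set_add R P Q = Q"
proof
  interpret P: ideal P R by fact
  interpret Q: ideal Q R by fact
  show "set_add R P Q \<subseteq> Q" using PQ by (force simp: mem_set_add_iff)
  show "Q \<subseteq> set_add R P Q"
  proof
    fix q assume "q \<in> Q"
    then have "q = \<zero> \<oplus> q" using Q.Icarr by simp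
    with \<open>q \<in> Q\<close> show "q \<in> set_add R P Q" using P.zero_closed mem_set_add_iff by blast
  qed
qed

lemma pow_minus_pow_factor:
  assumes a: "a \<in> carrier R" and d: "d \<in> carrier R"
  shows "\<exists>G\<in>carrier R. a [^] (k::nat) \<ominus> d [^] k = (a \<ominus> d) \<otimes> G"
proof (induction k)
  case 0
  show ?case using a d by (intro bexI[of _ "\<zero>"]) (auto, algebra)
next
  case (Suc k)
  then obtain G where G: "G \<in> carrier R" "a [^] k \<ominus> d [^] k = (a \<ominus> d) \<otimes> G" by blast
  have A: "a [^] k \<in> carrier R" and D: "d [^] k \<in> carrier R" using a d by auto
  have "(a \<ominus> d) \<otimes> (G \<otimes> a \<oplus> d [^] k) = ((a \<ominus> d) \<otimes> G) \<otimes> a \<oplus> (a \<ominus> d) \<otimes> d [^] k"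
    using a d G A D by algebra
  also have "\<dots> = (a [^] k \<ominus> d [^] k) \<otimes> a \<oplus> (a \<ominus> d) \<otimes> d [^] k" using G by simp
  also have "\<dots> = a [^] k \<otimes> a \<ominus> d [^] k \<otimes> d" using a d A D by algebra
  finally show ?case using a d G A D by (intro bexI[of _ "G \<otimes> a \<oplus> d [^] k"]) auto
qed

lemma primeideal_pow_mem:
  assumes Q: "primeideal Q R" and a: "a \<in> carrier R" and "a [^] (k::nat) \<in> Q"
  shows "a \<in> Q"
  using assms(3)
proof (induction k)
  case 0
  interpret Q: primeideal Q R by fact
  from 0 show ?case using Q.one_imp_carrier Q.I_notcarr by simp
next
  case (Suc k)
  interpret Q: primeideal Q R by fact
  from Suc.prems have "a [^] k \<otimes> a \<in> Q" by simp
  then have "a [^] k \<in> Q \<or> a \<in> Q" using Q.I_prime a by auto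
  then show ?case using Suc.IH by blast
qed

text \<open>In an n-adically closed ring every element has an n-th root (take T^n - c).\<close>
lemma nth_root_exists:
  fixes n :: nat
  assumes n: "n > 0" and closed: "n_adically_closed R n" and c: "c \<in> carrier R"
  shows "\<exists>x\<in>carrier R. x [^] n = c"
proof -
  define cf where "cf = (\<lambda>i::nat. if i = 0 then \<ominus> c else \<zero>)"
  have "cf \<in> {..<n} \<rightarrow> carrier R" using c cf_def by auto
  then obtain x where x: "x \<in> carrier R"
    and root: "x [^] n \<oplus> (\<Oplus>i\<in>{..<n}. cf i \<otimes> x [^] i) = \<zero>"
    using closed unfolding n_adically_closed_def by blast
  have "(\<Oplus>i\<in>{..<n}. cf i \<otimes> x [^] i) = (\<Oplus>i\<in>{..<n}. if 0 = i then \<ominus> c \<otimes> x [^] i else \<zero>)"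
    using x c by (intro finsum_cong) (auto simp: cf_def simp_implies_def)
  also have "\<dots> = \<ominus> c"
    using finsum_singleton[of 0 "{..<n}" "\<lambda>i. \<ominus> c \<otimes> x [^] i"] n x c by auto
  finally have "x [^] n \<oplus> \<ominus> c = \<zero>" using root by simp
  then have "x [^] n = c" using x c
    by (metis a_minus_def add.inv_closed minus_equality nat_pow_closed minus_minus)
  then show ?thesis using x by blast
qed

lemma translate_out_of_ideal:
  assumes P: "ideal P R" and Q: "ideal Q R" and p0: "p0 \<in> P" "p0 \<notin> Q"
    and y: "y \<in> carrier R"
  obtains p1 where "p1 \<in> P" "y \<oplus> p1 \<notin> Q"
proof -
  interpret P: ideal P R by fact
  interpret Q: ideal Q R by fact
  show thesis
  proof (cases "y \<in> Q")
    case True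
    have "y \<oplus> p0 \<notin> Q"
    proof
      assume "y \<oplus> p0 \<in> Q"
      then have "(y \<oplus> p0) \<oplus> \<ominus> y \<in> Q" by (rule Q.a_closed[OF _ Q.a_inv_closed[OF True]])
      moreover have "(y \<oplus> p0) \<oplus> \<ominus> y = p0" using y p0 P.Icarr by algebra
      ultimately have "p0 \<in> Q" by metis
      with p0 show False by simp
    qed
    then show thesis using that p0 by blast
  next
    case False
    then show thesis using that[of "\<zero>"] y P.zero_closed by simp
  qed
qed

lemma root_shift_mem_prime:
  fixes n :: nat
  assumes Q: "primeideal Q R" and n: "n > 0"
    and \<alpha>: "\<alpha> \<in> carrier R" "\<alpha> \<notin> Q" and a: "a \<in> carrier R" and b: "b \<in> Q"
    and root: "\<alpha> [^] n \<oplus> a \<otimes> \<alpha> [^] (n - 1) \<oplus> b = \<zero>"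
  shows "\<alpha> [^] (n - 1) \<otimes> (\<alpha> \<oplus> a) = \<ominus> b" and "\<alpha> \<oplus> a \<in> Q"
proof -
  interpret Q: primeideal Q R by fact
  have bc: "b \<in> carrier R" using b Q.Icarr by simp
  define A where "A = \<alpha> [^] (n - 1)"
  have Ac: "A \<in> carrier R" using \<alpha> A_def by simp
  have pow_n: "\<alpha> [^] n = A \<otimes> \<alpha>" using n A_def by (metis Suc_diff_1 nat_pow_Suc)
  have "A \<otimes> (\<alpha> \<oplus> a) = (A \<otimes> \<alpha> \<oplus> a \<otimes> A \<oplus> b) \<oplus> \<ominus> b"
    using \<alpha> a bc Ac by algebra
  also have "\<dots> = \<ominus> b" using root pow_n A_def bc by simp
  finally show eq: "\<alpha> [^] (n - 1) \<otimes> (\<alpha> \<oplus> a) = \<ominus> b" unfolding A_def .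
  have "A \<notin> Q" using primeideal_pow_mem[OF Q \<alpha>(1)] \<alpha>(2) A_def by auto
  moreover have "A \<otimes> (\<alpha> \<oplus> a) \<in> Q" using eq b A_def by simp
  ultimately show "\<alpha> \<oplus> a \<in> Q" using Q.I_prime[OF Ac] \<alpha>(1) a by blast
qed

text \<open>Writing
  \<alpha>^(n-1) - d^(n-1) = (\<alpha> - d) G one finds (\<alpha> - d)(s G + d^(n-1)) = -(p + d^(n-1) p1) \<in> P,
  and primality of P puts x or d^(n-1) into P + Q.\<close>
lemma set_add_power_cancel_from_root:
  fixes n :: nat
  assumes P: "primeideal P R" and Q: "ideal Q R"
    and x: "x \<in> carrier R" and d: "d \<in> carrier R" and \<alpha>: "\<alpha> \<in> carrier R"
    and pq: "p \<in> P" "q \<in> Q" "x \<otimes> d [^] (n - 1) = p \<oplus> q" and p1: "p1 \<in> P"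
    and sQ: "\<alpha> \<oplus> (x \<ominus> d \<oplus> p1) \<in> Q"
    and As: "\<alpha> [^] (n - 1) \<otimes> (\<alpha> \<oplus> (x \<ominus> d \<oplus> p1)) = q"
  shows "x \<in> set_add R P Q \<or> d [^] (n - 1) \<in> set_add R P Q"
proof -
  interpret P: primeideal P R by fact
  interpret Q: ideal Q R by fact
  define s where "s = \<alpha> \<oplus> (x \<ominus> d \<oplus> p1)"
  define A where "A = \<alpha> [^] (n - 1)"
  define D where "D = d [^] (n - 1)"
  have pc: "p \<in> carrier R" and qc: "q \<in> carrier R" and p1c: "p1 \<in> carrier R"
    using pq p1 P.Icarr Q.Icarr by auto
  have sc: "s \<in> carrier R" and Ac: "A \<in> carrier R" and Dc: "D \<in> carrier R"
    using s_def A_def D_def x d \<alpha> p1c by simp_all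
  have sQ': "s \<in> Q" and As': "A \<otimes> s = q" and xD: "x \<otimes> D = p \<oplus> q"
    using sQ As pq(3) unfolding A_def D_def s_def by simp_all
  obtain G where G: "G \<in> carrier R" "A \<ominus> D = (\<alpha> \<ominus> d) \<otimes> G"
    using pow_minus_pow_factor[OF \<alpha> d] A_def D_def by blast
  have "(\<alpha> \<ominus> d) \<otimes> (s \<otimes> G \<oplus> D) = s \<otimes> (A \<ominus> D) \<oplus> (\<alpha> \<ominus> d) \<otimes> D"
    using \<alpha> d sc G Dc by algebra
  also have "\<dots> = A \<otimes> s \<ominus> x \<otimes> D \<ominus> D \<otimes> p1"
    unfolding s_def using \<alpha> d x p1c Ac Dc by algebra
  also have "\<dots> = \<ominus> (p \<oplus> D \<otimes> p1)"
    using As' xD pc qc Dc p1c by algebra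
  finally have key: "(\<alpha> \<ominus> d) \<otimes> (s \<otimes> G \<oplus> D) = \<ominus> (p \<oplus> D \<otimes> p1)" .
  have "\<ominus> (p \<oplus> D \<otimes> p1) \<in> P" using pq p1 Dc by (intro P.a_inv_closed P.a_closed P.I_l_closed)
  then have "\<alpha> \<ominus> d \<in> P \<or> s \<otimes> G \<oplus> D \<in> P"
    using P.I_prime[of "\<alpha> \<ominus> d" "s \<otimes> G \<oplus> D"] key \<alpha> d sc G Dc by auto
  then show ?thesis
  proof
    assume "\<alpha> \<ominus> d \<in> P"
    then have "\<ominus> (\<alpha> \<ominus> d) \<oplus> \<ominus> p1 \<in> P" using p1 by (intro P.a_closed P.a_inv_closed)
    moreover have "x = (\<ominus> (\<alpha> \<ominus> d) \<oplus> \<ominus> p1) \<oplus> s"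
      unfolding s_def using \<alpha> d x p1c by algebra
    ultimately show ?thesis using sQ' mem_set_add_iff by blast
  next
    assume "s \<otimes> G \<oplus> D \<in> P"
    moreover have "\<ominus> (s \<otimes> G) \<in> Q"
      using sQ' G(1) by (intro Q.a_inv_closed Q.I_r_closed)
    moreover have "D = (s \<otimes> G \<oplus> D) \<oplus> \<ominus> (s \<otimes> G)" using sc G Dc by algebra
    ultimately have "D \<in> set_add R P Q" using mem_set_add_iff by blast
    then show ?thesis by (simp add: D_def)
  qed
qed

text \<open>Power cancellation (C) for the sum of two prime ideals with P \<not>\<subseteq> Q, assuming the
  root hypothesis for the prime Q: it supplies the \<alpha> required above for the polynomial
  T^n + (x - d + p1) T^(n-1) - q, where p1 \<in> P moves x - d out of Q.\<close>
lemma set_add_primes_power_cancel: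
  fixes n :: nat
  assumes n: "n > 0" and P: "primeideal P R" and Q: "primeideal Q R"
    and p0: "p0 \<in> P" "p0 \<notin> Q"
    and roots: "\<And>a b. a \<in> carrier R \<Longrightarrow> a \<notin> Q \<Longrightarrow> b \<in> Q \<Longrightarrow>
                  \<exists>\<alpha> \<in> carrier R - Q. \<alpha> [^] n \<oplus> a \<otimes> \<alpha> [^] (n - 1) \<oplus> b = \<zero>"
    and x: "x \<in> carrier R" and d: "d \<in> carrier R"
    and xd: "x \<otimes> d [^] (n - 1) \<in> set_add R P Q"
  shows "x \<in> set_add R P Q \<or> d [^] (n - 1) \<in> set_add R P Q"
proof -
  interpret P: primeideal P R by fact
  interpret Q: primeideal Q R by fact
  obtain p q where pq: "p \<in> P" "q \<in> Q" "x \<otimes> d [^] (n - 1) = p \<oplus> q"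
    using xd by (auto simp: mem_set_add_iff)
  obtain p1 where p1: "p1 \<in> P" "x \<ominus> d \<oplus> p1 \<notin> Q"
    using translate_out_of_ideal[OF P.is_ideal Q.is_ideal p0, of "x \<ominus> d"] x d by auto
  have a: "x \<ominus> d \<oplus> p1 \<in> carrier R" using x d p1 P.Icarr by simp
  obtain \<alpha> where \<alpha>: "\<alpha> \<in> carrier R" "\<alpha> \<notin> Q"
    and root: "\<alpha> [^] n \<oplus> (x \<ominus> d \<oplus> p1) \<otimes> \<alpha> [^] (n - 1) \<oplus> \<ominus> q = \<zero>"
    using roots[OF a p1(2) Q.a_inv_closed[OF pq(2)]] by auto
  note shift = root_shift_mem_prime[OF Q n \<alpha> a Q.a_inv_closed[OF pq(2)] root]
  have "\<alpha> [^] (n - 1) \<otimes> (\<alpha> \<oplus> (x \<ominus> d \<oplus> p1)) = q" using shift(1) pq(2) Q.Icarr by simp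
  with shift(2) show ?thesis
    using set_add_power_cancel_from_root[OF P Q.is_ideal x d \<alpha>(1) pq p1(1)] by blast
qed

text \<open>Iterating (C): if some power of e lies in I, then already e^(n-1) does
  (powers e^k with k \<ge> n split off a factor e^(n-1); here n > 1 makes the exponent drop).\<close>
lemma power_cancel_pow_mem:
  fixes n :: nat
  assumes n: "n > 1" and I: "ideal I R"
    and cancel: "\<And>x d. x \<in> carrier R \<Longrightarrow> d \<in> carrier R \<Longrightarrow> x \<otimes> d [^] (n - 1) \<in> I \<Longrightarrow>
                   x \<in> I \<or> d [^] (n - 1) \<in> I"
    and e: "e \<in> carrier R"
  shows "e [^] (k::nat) \<in> I \<Longrightarrow> e [^] (n - 1) \<in> I"
proof (induction k rule: less_induct)
  case (less k)
  interpret I: ideal I R by fact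
  show ?case
  proof (cases "k \<le> n - 1")
    case True
    then have "n - 1 = k + (n - 1 - k)" by arith
    then have "e [^] (n - 1) = e [^] (k + (n - 1 - k))" by (rule arg_cong)
    also have "\<dots> = e [^] k \<otimes> e [^] (n - 1 - k)" using nat_pow_mult[OF e] by simp
    finally have "e [^] (n - 1) = e [^] k \<otimes> e [^] (n - 1 - k)" .
    then show ?thesis using I.I_r_closed less e by simp
  next
    case False
    then have "e [^] k = e [^] (k - (n - 1) + (n - 1))" by simp
    also have "\<dots> = e [^] (k - (n - 1)) \<otimes> e [^] (n - 1)" using nat_pow_mult[OF e] by simp
    finally have "e [^] k = e [^] (k - (n - 1)) \<otimes> e [^] (n - 1)" .
    then have "e [^] (k - (n - 1)) \<in> I \<or> e [^] (n - 1) \<in> I" using cancel e less by simp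
    moreover have "k - (n - 1) < k" using False n by simp
    ultimately show ?thesis using less.IH by blast
  qed
qed

lemma primeideal_of_power_cancel:
  fixes n :: nat
  assumes n: "n > 1" and closed: "n_adically_closed R n"
    and I: "ideal I R" and proper: "I \<noteq> carrier R"
    and cancel: "\<And>x d. x \<in> carrier R \<Longrightarrow> d \<in> carrier R \<Longrightarrow> x \<otimes> d [^] (n - 1) \<in> I \<Longrightarrow>
                   x \<in> I \<or> d [^] (n - 1) \<in> I"
  shows "primeideal I R"
proof -
  interpret I: ideal I R by fact
  text \<open>I is closed under (n-1)-th roots: with d^n = c, c^(n-1) = d^(n(n-1)) \<in> I gives
    d^(n-1) \<in> I and hence c = d^(n-1) d \<in> I.\<close>
  have root_mem: "c \<in> I" if c: "c \<in> carrier R" "c [^] (n - 1) \<in> I" for c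
  proof -
    obtain d where d: "d \<in> carrier R" "d [^] n = c" using nth_root_exists[OF _ closed c(1)] n by auto
    have "d [^] (n * (n - 1)) \<in> I" using c d nat_pow_pow[of d n "n - 1"] by simp
    then have "d [^] (n - 1) \<in> I" using power_cancel_pow_mem[OF n I cancel d(1)] by blast
    moreover have "c = d [^] (n - 1) \<otimes> d" using n d by (metis Suc_diff_1 less_trans zero_less_one nat_pow_Suc)
    ultimately show ?thesis using d I.I_r_closed by simp
  qed
  show ?thesis
  proof (rule primeidealI[OF I is_cring])
    show "carrier R \<noteq> I" using proper by simp
    fix a b assume a: "a \<in> carrier R" and b: "b \<in> carrier R" and ab: "a \<otimes> b \<in> I"
    have "n - 1 = Suc (n - 2)" using n by simp
    then have "a \<otimes> b [^] (n - 1) = (a \<otimes> b) \<otimes> b [^] (n - 2)"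
      using a b by (simp add: m_ac)
    also have "\<dots> \<in> I" using ab b by (simp add: I.I_r_closed)
    finally have "a \<in> I \<or> b [^] (n - 1) \<in> I" using cancel a b by blast
    then show "a \<in> I \<or> b \<in> I" using root_mem b by blast
  qed
qed

end

theorem mainTheorem4:
  fixes R (structure) and n :: nat
  assumes "cring R"
    and "n > 1"
    and "n_adically_closed R n"
    and "\<And>p a b. primeideal p R \<Longrightarrow> a \<in> carrier R \<Longrightarrow> b \<in> carrier R \<Longrightarrow> a \<notin> p \<Longrightarrow> b \<in> p \<Longrightarrow>
           \<exists>\<alpha> \<in> carrier R - p. \<alpha> [^] n \<oplus> a \<otimes> \<alpha> [^] (n - 1) \<oplus> b = \<zero>"
    and "primeideal P R" and "primeideal Q R"
  shows "set_add R P Q = carrier R \<or> primeideal (set_add R P Q) R"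
proof -
  interpret cring R by fact
  interpret P: primeideal P R by fact
  interpret Q: primeideal Q R by fact
  show ?thesis
  proof (cases "P \<subseteq> Q")
    case True
    then have "set_add R P Q = Q" by (rule set_add_of_subset[OF P.is_ideal Q.is_ideal])
    with \<open>primeideal Q R\<close> show ?thesis by simp
  next
    case False
    then obtain p0 where p0: "p0 \<in> P" "p0 \<notin> Q" by blast
    have roots_Q: "\<And>a b. a \<in> carrier R \<Longrightarrow> a \<notin> Q \<Longrightarrow> b \<in> Q \<Longrightarrow>
        \<exists>\<alpha> \<in> carrier R - Q. \<alpha> [^] n \<oplus> a \<otimes> \<alpha> [^] (n - 1) \<oplus> b = \<zero>"
      using assms(4)[OF \<open>primeideal Q R\<close> _ Q.Icarr] by simp
    have "n > 0" using \<open>n > 1\<close> by simp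
    note cancel = set_add_primes_power_cancel[OF \<open>n > 0\<close> \<open>primeideal P R\<close> \<open>primeideal Q R\<close> p0 roots_Q]
    show ?thesis
    proof (cases "set_add R P Q = carrier R")
      case False
      show ?thesis
        using primeideal_of_power_cancel[OF \<open>n > 1\<close> \<open>n_adically_closed R n\<close>
                add_ideals[OF P.is_ideal Q.is_ideal] False cancel] by simp
    qed simp
  qed
qed

end
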